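(* Let $P$ be a program, $G$ a p-goal and $S$ a scheduling rule. Suppose every infinite p-SLD derivation of $G$ in $P$ via $S$ is pruned by p-$EVR_L$. Then there is a finite bound $l$ such that every resolvent $R$ occurring in any p-SLD derivation of $G$ in $P$ via $S$ satisfies $\#R\le l$.
   Context: A p-atom is a pair $a[p]$ of an atom $a$ and a rational priority $p$. A p-goal is a finite set of p-atoms with pairwise distinct priorities, regarded as a list ordered by increasing priority; $\#G$ is its number of p-atoms. Substitutions act on atoms and leave priorities unchanged. A clause is $h\leftarrow B$ with $h$ an atom and $B$ a p-goal; a program is a finite set of clauses. For p-goals with no common priority, $F+G=F\cup G$; $F|G$ denotes $F+G$ when all priorities of $F$ are smaller than those of $G$. A shifting $\underline{\pi}$ is a strictly increasing bijection $\mathbb{Q}\to\mathbb{Q}$ acting on priorities. Priority derivation step: for a p-goal $a|F$ ($a$ of least priority), clause $c=(h\leftarrow B)$, renaming $\xi$ with $var(a|F)\cap var(c\xi)=\emptyset$, idempotent relevant mgu $\theta$ of $a$ and $h\xi$, shifting $\underline{\pi}$ with $F$, $B\xi\underline{\pi}$ sharing no priority: $a|F\xrightarrow{c\xi,\theta}(F+B\xi\underline{\pi})\theta$. A p-SLD derivation of $G_0$ in $P$ is a finite or infinite sequence $G_0\xrightarrow{c_0\xi_0,\theta_0}G_1\xrightarrow{c_1\xi_1,\theta_1}\cdots$ of such steps with $c_j\in P$ and each $c_j\xi_j$ variable-disjoint from $G_0$ and all earlier renamed clauses; it is via $S$ if all its steps belong to $S$. Lowering: for $c=(h\leftarrow B)$,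 a step $a\lambda\underline{\sigma}|(K\lambda\underline{\sigma}+X)\xrightarrow{c}(X+K\lambda\underline{\sigma}+B\xi''\underline{\theta}'')\alpha''$ is a lowering by $X$ of $a|K\xrightarrow{c}(K+B\xi'\underline{\theta}')\alpha'$; a congruent lowering if some shifting $\underline{\rho}$ has $K\underline{\rho}=K\underline{\sigma}$ and $B\underline{\theta}'\underline{\rho}=B\underline{\theta}''$. Steps are (congruent) lowerings of each other if each is a (congruent) lowering of the other. A set $S$ of steps is deterministic if any two steps of $S$ that are lowerings of each other are congruent lowerings of each other; complete if (i) whenever some step $G\xrightarrow{c}\cdot$ exists, some step $G\xrightarrow{c}\cdot$ lies in $S$, and (ii) $S$ contains every step that is a congruent lowering of each other with a step of $S$. A scheduling rule is a complete deterministic set of priority derivation steps. p-$EVR_L$ check: a derivation $G_0\xrightarrow{\theta_0}G_1\xrightarrow{\theta_1}\cdots$ is pruned by p-$EVR_L$ if there exist $0\le i<j$, a renaming $\tau$ and a shifting $\underline{\tau}$ with $G_0\theta_0\cdots\theta_{j-1}=G_0\theta_0\cdots\theta_{i-1}\tau$ and $G_j=G_i\tau\underline{\tau}$. *)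

theory Defs
  imports Main "HOL-Library.Extended_Nat"
begin

datatype ('f, 'v) trm = Var 'v | Fn 'f "('f, 'v) trm list"

type_synonym ('f, 'v) atom = "'f \<times> ('f, 'v) trm list"
type_synonym ('f, 'v) subst = "'v \<Rightarrow> ('f, 'v) trm"

fun subst_trm :: "('f, 'v) subst \<Rightarrow> ('f, 'v) trm \<Rightarrow> ('f, 'v) trm" where
  "subst_trm \<sigma> (Var x) = \<sigma> x"
| "subst_trm \<sigma> (Fn f ts) = Fn f (map (subst_trm \<sigma>) ts)"

fun vars_trm :: "('f, 'v) trm \<Rightarrow> 'v set" where
  "vars_trm (Var x) = {x}"
| "vars_trm (Fn f ts) = (\<Union>t\<in>set ts. vars_trm t)"

definition subst_atom :: "('f, 'v) subst \<Rightarrow> ('f, 'v) atom \<Rightarrow> ('f, 'v) atom" where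
  "subst_atom \<sigma> a = (fst a, map (subst_trm \<sigma>) (snd a))"

definition vars_atom :: "('f, 'v) atom \<Rightarrow> 'v set" where
  "vars_atom a = (\<Union>t\<in>set (snd a). vars_trm t)"

definition subst_comp :: "('f, 'v) subst \<Rightarrow> ('f, 'v) subst \<Rightarrow> ('f, 'v) subst" where
  "subst_comp \<sigma> \<tau> = (\<lambda>x. subst_trm \<tau> (\<sigma> x))"

definition subst_dom :: "('f, 'v) subst \<Rightarrow> 'v set" where
  "subst_dom \<sigma> = {x. \<sigma> x \<noteq> Var x}"

definition subst_range_vars :: "('f, 'v) subst \<Rightarrow> 'v set" where
  "subst_range_vars \<sigma> = (\<Union>x\<in>subst_dom \<sigma>. vars_trm (\<sigma> x))"

definition idempotent :: "('f, 'v) subst \<Rightarrow> bool" where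
  "idempotent \<theta> \<longleftrightarrow> subst_comp \<theta> \<theta> = \<theta>"

definition unifier :: "('f, 'v) subst \<Rightarrow> ('f, 'v) atom \<Rightarrow> ('f, 'v) atom \<Rightarrow> bool" where
  "unifier \<theta> a b \<longleftrightarrow> subst_atom \<theta> a = subst_atom \<theta> b"

definition is_mgu :: "('f, 'v) subst \<Rightarrow> ('f, 'v) atom \<Rightarrow> ('f, 'v) atom \<Rightarrow> bool" where
  "is_mgu \<theta> a b \<longleftrightarrow> unifier \<theta> a b \<and> (\<forall>\<sigma>. unifier \<sigma> a b \<longrightarrow> (\<exists>\<delta>. \<sigma> = subst_comp \<theta> \<delta>))"

definition relevant :: "('f, 'v) subst \<Rightarrow> ('f, 'v) atom \<Rightarrow> ('f, 'v) atom \<Rightarrow> bool" where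
  "relevant \<theta> a b \<longleftrightarrow> subst_dom \<theta> \<union> subst_range_vars \<theta> \<subseteq> vars_atom a \<union> vars_atom b"

definition renaming :: "('f, 'v) subst \<Rightarrow> bool" where
  "renaming \<xi> \<longleftrightarrow> (\<exists>f. bij f \<and> \<xi> = (\<lambda>x. Var (f x)))"

type_synonym ('f, 'v) patom = "('f, 'v) atom \<times> rat"
type_synonym ('f, 'v) pgoal = "('f, 'v) patom set"

definition is_pgoal :: "('f, 'v) pgoal \<Rightarrow> bool" where
  "is_pgoal G \<longleftrightarrow> finite G \<and> inj_on snd G"

definition prios :: "('f, 'v) pgoal \<Rightarrow> rat set" where
  "prios G = snd ` G"

definition subst_goal :: "('f, 'v) subst \<Rightarrow> ('f, 'v) pgoal \<Rightarrow> ('f, 'v) pgoal" where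
  "subst_goal \<sigma> G = (\<lambda>(a, p). (subst_atom \<sigma> a, p)) ` G"

definition vars_goal :: "('f, 'v) pgoal \<Rightarrow> 'v set" where
  "vars_goal G = (\<Union>q\<in>G. vars_atom (fst q))"

definition shifting :: "(rat \<Rightarrow> rat) \<Rightarrow> bool" where
  "shifting \<pi> \<longleftrightarrow> strict_mono \<pi> \<and> bij \<pi>"

definition shift_goal :: "(rat \<Rightarrow> rat) \<Rightarrow> ('f, 'v) pgoal \<Rightarrow> ('f, 'v) pgoal" where
  "shift_goal \<pi> G = (\<lambda>(a, p). (a, \<pi> p)) ` G"

definition pgoal_split :: "('f, 'v) pgoal \<Rightarrow> ('f, 'v) patom \<Rightarrow> ('f, 'v) pgoal \<Rightarrow> bool" where
  "pgoal_split G a F \<longleftrightarrow> G = insert a F \<and> (\<forall>q\<in>F. snd a < snd q)"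

definition subst_patom :: "('f, 'v) subst \<Rightarrow> ('f, 'v) patom \<Rightarrow> ('f, 'v) patom" where
  "subst_patom \<sigma> q = (subst_atom \<sigma> (fst q), snd q)"

type_synonym ('f, 'v) clause = "('f, 'v) atom \<times> ('f, 'v) pgoal"

definition is_clause :: "('f, 'v) clause \<Rightarrow> bool" where
  "is_clause c \<longleftrightarrow> is_pgoal (snd c)"

definition program :: "('f, 'v) clause set \<Rightarrow> bool" where
  "program P \<longleftrightarrow> finite P \<and> (\<forall>c\<in>P. is_clause c)"

definition subst_clause :: "('f, 'v) subst \<Rightarrow> ('f, 'v) clause \<Rightarrow> ('f, 'v) clause" where
  "subst_clause \<sigma> c = (subst_atom \<sigma> (fst c), subst_goal \<sigma> (snd c))"

definition vars_clause :: "('f, 'v) clause \<Rightarrow> 'v set" where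
  "vars_clause c = vars_atom (fst c) \<union> vars_goal (snd c)"

text \<open>A step records: source goal, clause c (of the program, unrenamed), renaming \<xi>,
  mgu \<theta>, shifting \<pi>, resolvent.\<close>
datatype ('f, 'v) pstep =
  PStep (st_src: "('f, 'v) pgoal") (st_clause: "('f, 'v) clause") (st_ren: "('f, 'v) subst")
        (st_mgu: "('f, 'v) subst") (st_shift: "rat \<Rightarrow> rat") (st_tgt: "('f, 'v) pgoal")

definition is_step :: "('f, 'v) pstep \<Rightarrow> bool" where
  "is_step s \<longleftrightarrow> (let G = st_src s; c = st_clause s; \<xi> = st_ren s; \<theta> = st_mgu s;
                      \<pi> = st_shift s; h = fst c; B = snd c in
     is_pgoal G \<and> is_clause c \<and> renaming \<xi> \<and> shifting \<pi> \<and>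
     vars_goal G \<inter> vars_clause (subst_clause \<xi> c) = {} \<and>
     (\<exists>a F. pgoal_split G a F \<and>
        idempotent \<theta> \<and> is_mgu \<theta> (fst a) (subst_atom \<xi> h) \<and> relevant \<theta> (fst a) (subst_atom \<xi> h) \<and>
        prios F \<inter> prios (shift_goal \<pi> (subst_goal \<xi> B)) = {} \<and>
        st_tgt s = subst_goal \<theta> (F \<union> shift_goal \<pi> (subst_goal \<xi> B))))"

text \<open>The witness data of "s2 is a lowering by X of s1": s1 = a|K -c-> ..., and
  s2 = a\<lambda>\<sigma> | (K\<lambda>\<sigma> + X) -c-> ... (resolvent shapes are forced by is_step).\<close>
definition lowering_wit ::
  "('f, 'v) pgoal \<Rightarrow> ('f, 'v) patom \<Rightarrow> ('f, 'v) pgoal \<Rightarrow> ('f, 'v) subst \<Rightarrow> (rat \<Rightarrow> rat)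
   \<Rightarrow> ('f, 'v) pstep \<Rightarrow> ('f, 'v) pstep \<Rightarrow> bool" where
  "lowering_wit X a K lam \<sigma> s2 s1 \<longleftrightarrow>
     is_step s1 \<and> is_step s2 \<and> st_clause s2 = st_clause s1 \<and> shifting \<sigma> \<and>
     pgoal_split (st_src s1) a K \<and>
     prios X \<inter> prios (shift_goal \<sigma> (subst_goal lam K)) = {} \<and>
     pgoal_split (st_src s2) (apfst (subst_atom lam) (apsnd \<sigma> a)) (shift_goal \<sigma> (subst_goal lam K) \<union> X)"

definition lowering_by :: "('f, 'v) pgoal \<Rightarrow> ('f, 'v) pstep \<Rightarrow> ('f, 'v) pstep \<Rightarrow> bool" where
  "lowering_by X s2 s1 \<longleftrightarrow> (\<exists>a K lam \<sigma>. lowering_wit X a K lam \<sigma> s2 s1)"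

definition lowering :: "('f, 'v) pstep \<Rightarrow> ('f, 'v) pstep \<Rightarrow> bool" where
  "lowering s2 s1 \<longleftrightarrow> (\<exists>X. lowering_by X s2 s1)"

definition congruent_lowering :: "('f, 'v) pstep \<Rightarrow> ('f, 'v) pstep \<Rightarrow> bool" where
  "congruent_lowering s2 s1 \<longleftrightarrow>
     (\<exists>X a K lam \<sigma> \<rho>. lowering_wit X a K lam \<sigma> s2 s1 \<and> shifting \<rho> \<and>
        shift_goal \<rho> K = shift_goal \<sigma> K \<and>
        shift_goal \<rho> (shift_goal (st_shift s1) (snd (st_clause s1)))
          = shift_goal (st_shift s2) (snd (st_clause s1)))"

definition mutual_lowering :: "('f, 'v) pstep \<Rightarrow> ('f, 'v) pstep \<Rightarrow> bool" where
  "mutual_lowering s1 s2 \<longleftrightarrow> lowering s1 s2 \<and> lowering s2 s1"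

definition mutual_congruent_lowering :: "('f, 'v) pstep \<Rightarrow> ('f, 'v) pstep \<Rightarrow> bool" where
  "mutual_congruent_lowering s1 s2 \<longleftrightarrow> congruent_lowering s1 s2 \<and> congruent_lowering s2 s1"

definition deterministic :: "('f, 'v) pstep set \<Rightarrow> bool" where
  "deterministic S \<longleftrightarrow> (\<forall>s1\<in>S. \<forall>s2\<in>S. mutual_lowering s1 s2 \<longrightarrow> mutual_congruent_lowering s1 s2)"

definition complete_steps :: "('f, 'v) pstep set \<Rightarrow> bool" where
  "complete_steps S \<longleftrightarrow>
     (\<forall>G c. (\<exists>s. is_step s \<and> st_src s = G \<and> st_clause s = c) \<longrightarrow>
            (\<exists>s\<in>S. st_src s = G \<and> st_clause s = c)) \<and>
     (\<forall>s\<in>S. \<forall>s'. mutual_congruent_lowering s' s \<longrightarrow> s' \<in> S)"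

definition scheduling_rule :: "('f, 'v) pstep set \<Rightarrow> bool" where
  "scheduling_rule S \<longleftrightarrow> (\<forall>s\<in>S. is_step s) \<and> complete_steps S \<and> deterministic S"

text \<open>A derivation of G0 with n steps (n = \<infinity> for infinite derivations), given by ds 0, ds 1, ...\<close>
fun goal_at :: "('f, 'v) pgoal \<Rightarrow> (nat \<Rightarrow> ('f, 'v) pstep) \<Rightarrow> nat \<Rightarrow> ('f, 'v) pgoal" where
  "goal_at G0 ds 0 = G0"
| "goal_at G0 ds (Suc j) = st_tgt (ds j)"

definition renamed_clause :: "('f, 'v) pstep \<Rightarrow> ('f, 'v) clause" where
  "renamed_clause s = subst_clause (st_ren s) (st_clause s)"

definition pSLD :: "('f, 'v) clause set \<Rightarrow> ('f, 'v) pstep set \<Rightarrow> ('f, 'v) pgoal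
                    \<Rightarrow> enat \<Rightarrow> (nat \<Rightarrow> ('f, 'v) pstep) \<Rightarrow> bool" where
  "pSLD P S G0 n ds \<longleftrightarrow>
     (\<forall>j. enat j < n \<longrightarrow>
        is_step (ds j) \<and> ds j \<in> S \<and> st_clause (ds j) \<in> P \<and>
        st_src (ds j) = goal_at G0 ds j \<and>
        vars_clause (renamed_clause (ds j)) \<inter>
          (vars_goal G0 \<union> (\<Union>i<j. vars_clause (renamed_clause (ds i)))) = {})"

fun inst_at :: "('f, 'v) pgoal \<Rightarrow> (nat \<Rightarrow> ('f, 'v) pstep) \<Rightarrow> nat \<Rightarrow> ('f, 'v) pgoal" where
  "inst_at G0 ds 0 = G0"
| "inst_at G0 ds (Suc k) = subst_goal (st_mgu (ds k)) (inst_at G0 ds k)"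

definition pruned_EVR :: "('f, 'v) pgoal \<Rightarrow> enat \<Rightarrow> (nat \<Rightarrow> ('f, 'v) pstep) \<Rightarrow> bool" where
  "pruned_EVR G0 n ds \<longleftrightarrow>
     (\<exists>i j \<tau> \<tau>s. i < j \<and> enat j \<le> n \<and> renaming \<tau> \<and> shifting \<tau>s \<and>
        inst_at G0 ds j = subst_goal \<tau> (inst_at G0 ds i) \<and>
        goal_at G0 ds j = shift_goal \<tau>s (subst_goal \<tau> (goal_at G0 ds i)))"

end

theory Submission
  imports Defs
begin

text \<open>Call two p-goals variants if one arises from the other by a bijective renaming of
  variables and a shifting of priorities; variants have the same size. A scheduling rule is
  closed under renaming and shifting its steps (completeness), and by determinism two of its
  steps with the same clause from variant goals have variant resolvents. Hence, up to variance,
  the goals of a derivation via a scheduling rule depend only on its clause sequence, and the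
  part of a derivation between two variant goals can be cut out: every resolvent is a variant of
  the last goal of a derivation without two variant goals. Such variant-free derivations have
  bounded length. Otherwise Koenig's lemma over the finite program yields an infinite clause
  sequence all of whose prefixes label variant-free derivations; the derivation following it is
  infinite, and the two variant goals that p-\<open>EVR\<^sub>L\<close> finds in it reappear in one of those
  finite derivations. As each step adds at most the size of a clause body, the resolvents are
  bounded.\<close>

section \<open>Extending injections to bijections\<close>

lemma inj_on_extends_to_bij:
  fixes k :: "'a \<Rightarrow> 'a"
  assumes "finite A" "inj_on k A"
  obtains g where "bij g" "\<forall>x\<in>A. g x = k x"
proof -
  define D1 where "D1 = k ` A - A"
  define D2 where "D2 = A - k ` A"
  have "card D1 = card (k ` A) - card (k ` A \<inter> A)" "card D2 = card A - card (A \<inter> k ` A)"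
    using assms(1) by (simp_all add: D1_def D2_def card_Diff_subset_Int)
  moreover have "card (k ` A) = card A" using assms by (simp add: card_image)
  ultimately have "card D1 = card D2" by (simp add: Int_commute)
  moreover have "finite D1" "finite D2" using assms(1) by (simp_all add: D1_def D2_def)
  ultimately obtain m where m: "bij_betw m D1 D2" using finite_same_card_bij by metis
  define C where "C = - (A \<union> k ` A)"
  define g where "g x = (if x \<in> A then k x else if x \<in> D1 then m x else x)" for x
  have "bij_betw g (A \<union> (D1 \<union> C)) (k ` A \<union> (D2 \<union> C))"
    unfolding g_def using assms(2) m
    by (intro bij_betw_disjoint_Un bij_betw_id[unfolded id_def])
       (auto simp: inj_on_imp_bij_betw D1_def D2_def C_def)
  moreover have "A \<union> (D1 \<union> C) = UNIV" "k ` A \<union> (D2 \<union> C) = UNIV"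
    by (auto simp: D1_def D2_def C_def)
  ultimately have "bij g" by simp
  then show ?thesis using that by (simp add: g_def)
qed

lemma inj_on_extends_to_bij_fresh:
  fixes h :: "'a \<Rightarrow> 'a"
  assumes "infinite (UNIV :: 'a set)" and "finite A" "finite B" "A \<inter> B = {}" "inj_on h A"
    and "finite Y"
  obtains g where "bij g" "\<forall>x\<in>A. g x = h x" "g ` B \<inter> Y = {}"
proof -
  have "infinite (- (Y \<union> h ` A))" using assms by (simp add: Compl_eq_Diff_UNIV)
  then obtain C where C: "C \<subseteq> - (Y \<union> h ` A)" "finite C" "card C = card B"
    using infinite_arbitrarily_large by metis
  then obtain k where k: "bij_betw k B C" using finite_same_card_bij assms(3) by metis
  define k' where "k' x = (if x \<in> A then h x else k x)" for x
  have "bij_betw k' (A \<union> B) (h ` A \<union> C)"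
    unfolding k'_def using assms(4,5) k C(1)
    by (intro bij_betw_disjoint_Un) (auto simp: inj_on_imp_bij_betw)
  then obtain g where g: "bij g" "\<forall>x\<in>A \<union> B. g x = k' x"
    using inj_on_extends_to_bij assms(2,3) by (metis bij_betw_def finite_UnI)
  have "g x \<in> C" if "x \<in> B" for x
    using g(2) that assms(4) k by (auto simp: k'_def bij_betw_def)
  then have "g ` B \<inter> Y = {}" using C(1) by blast
  moreover have "\<forall>x\<in>A. g x = h x" using g(2) by (simp add: k'_def)
  ultimately show ?thesis using that g(1) by blast
qed

lemma bij_fixing_and_transferring:
  fixes h1 h2 :: "'a \<Rightarrow> 'a"
  assumes "finite V" "finite C" "bij h1" "bij h2" "V \<inter> h1 ` C = {}" "V \<inter> h2 ` C = {}"
  obtains g where "bij g" "\<forall>x\<in>V. g x = x" "\<forall>x\<in>C. g (h1 x) = h2 x"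
proof -
  define k where "k x = (if x \<in> V then x else h2 (inv h1 x))" for x
  have "inj (h2 \<circ> inv h1)" using assms(3,4) by (simp add: inj_compose bij_is_inj bij_imp_bij_inv)
  then have "inj_on (h2 \<circ> inv h1) (h1 ` C)" by (rule inj_on_subset) simp
  moreover have "(h2 \<circ> inv h1) ` h1 ` C = h2 ` C"
    using assms(3) by (simp add: image_comp comp_assoc bij_is_inj)
  ultimately have "bij_betw (\<lambda>x. h2 (inv h1 x)) (h1 ` C) (h2 ` C)"
    by (simp add: bij_betw_def o_def)
  then have "bij_betw k (V \<union> h1 ` C) (V \<union> h2 ` C)"
    unfolding k_def using assms(5,6) by (intro bij_betw_disjoint_Un bij_betw_id[unfolded id_def])
  then obtain g where g: "bij g" "\<forall>x\<in>V \<union> h1 ` C. g x = k x"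
    using inj_on_extends_to_bij assms(1,2) by (metis bij_betw_def finite_UnI finite_imageI)
  have "g (h1 x) = h2 x" if "x \<in> C" for x
    using g(2) that assms(3,5) by (auto simp: k_def bij_is_inj)
  then show ?thesis using that g by (simp add: k_def)
qed

definition ren :: "('v \<Rightarrow> 'v) \<Rightarrow> ('f, 'v) subst" where
  "ren f = (\<lambda>x. Var (f x))"

lemma subst_trm_comp: "subst_trm (subst_comp \<sigma> \<tau>) t = subst_trm \<tau> (subst_trm \<sigma> t)"
  by (induction t) (auto simp: subst_comp_def)

lemma subst_trm_cong: "(\<And>x. x \<in> vars_trm t \<Longrightarrow> \<sigma> x = \<tau> x) \<Longrightarrow> subst_trm \<sigma> t = subst_trm \<tau> t"
  by (induction t) auto

lemma subst_trm_Var [simp]: "subst_trm Var t = t"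
  by (induction t) (auto simp: map_idI)

lemma vars_trm_subst: "vars_trm (subst_trm \<sigma> t) = (\<Union>x\<in>vars_trm t. vars_trm (\<sigma> x))"
  by (induction t) auto

lemma finite_vars_trm [simp]: "finite (vars_trm t)"
  by (induction t) auto

lemma subst_trm_fixed_imp_Var: "subst_trm \<sigma> t = t \<Longrightarrow> x \<in> vars_trm t \<Longrightarrow> \<sigma> x = Var x"
proof (induction t)
  case (Fn f ts)
  then obtain t where t: "t \<in> set ts" "x \<in> vars_trm t" by auto
  have "subst_trm \<sigma> t = t"
    using Fn.prems(1) t(1) map_eq_conv[of "subst_trm \<sigma>" ts id] by simp
  then show ?case using Fn.IH t by blast
qed simp

lemma subst_atom_comp: "subst_atom (subst_comp \<sigma> \<tau>) a = subst_atom \<tau> (subst_atom \<sigma> a)"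
  by (simp add: subst_atom_def subst_trm_comp)

lemma subst_atom_cong: "(\<And>x. x \<in> vars_atom a \<Longrightarrow> \<sigma> x = \<tau> x) \<Longrightarrow> subst_atom \<sigma> a = subst_atom \<tau> a"
  unfolding subst_atom_def vars_atom_def by (auto intro!: subst_trm_cong)

lemma subst_atom_Var [simp]: "subst_atom Var a = a"
  by (simp add: subst_atom_def map_idI)

lemma vars_atom_subst: "vars_atom (subst_atom \<sigma> a) = (\<Union>x\<in>vars_atom a. vars_trm (\<sigma> x))"
  by (auto simp: vars_atom_def subst_atom_def vars_trm_subst)

lemma finite_vars_atom [simp]: "finite (vars_atom a)"
  by (simp add: vars_atom_def)

lemma subst_comp_assoc: "subst_comp (subst_comp \<sigma> \<tau>) \<upsilon> = subst_comp \<sigma> (subst_comp \<tau> \<upsilon>)"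
  by (simp add: fun_eq_iff subst_comp_def subst_trm_comp[unfolded subst_comp_def])

lemma subst_comp_Var_right [simp]: "subst_comp \<sigma> Var = \<sigma>"
  by (simp add: fun_eq_iff subst_comp_def)

lemma subst_comp_ren: "subst_comp (ren f) (ren g) = ren (g \<circ> f)"
  by (simp add: subst_comp_def ren_def)

lemma ren_id: "ren id = Var"
  by (simp add: ren_def fun_eq_iff)

lemma vars_trm_ren [simp]: "vars_trm (subst_trm (ren f) t) = f ` vars_trm t"
  by (auto simp: vars_trm_subst ren_def)

lemma vars_atom_ren [simp]: "vars_atom (subst_atom (ren f) a) = f ` vars_atom a"
  by (auto simp: vars_atom_subst ren_def)

lemma subst_trm_ren_inv: "bij f \<Longrightarrow> subst_trm (ren (inv f)) (subst_trm (ren f) t) = t"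
  by (simp add: subst_trm_comp[symmetric] subst_comp_ren bij_is_inj ren_id)

lemma subst_atom_ren_inv: "bij f \<Longrightarrow> subst_atom (ren (inv f)) (subst_atom (ren f) a) = a"
  by (simp add: subst_atom_comp[symmetric] subst_comp_ren bij_is_inj ren_id)

lemma subst_trm_ren_eq_iff: "bij f \<Longrightarrow> subst_trm (ren f) s = subst_trm (ren f) t \<longleftrightarrow> s = t"
  by (metis subst_trm_ren_inv)

lemma subst_atom_ren_eq_iff: "bij f \<Longrightarrow> subst_atom (ren f) a = subst_atom (ren f) b \<longleftrightarrow> a = b"
  by (metis subst_atom_ren_inv)

lemma renaming_iff_ren: "renaming \<xi> \<longleftrightarrow> (\<exists>f. bij f \<and> \<xi> = ren f)"
  by (simp add: renaming_def ren_def)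

lemma left_inverse_subst_imp_ren:
  assumes inv: "\<forall>y\<in>V. subst_trm \<delta>' (\<delta> y) = Var y" and "finite V"
  obtains g where "bij g" "\<forall>y\<in>V. \<delta> y = Var (g y)"
proof -
  have "\<exists>z. \<delta> y = Var z" if "y \<in> V" for y
    using inv that by (cases "\<delta> y") auto
  then obtain k where k: "\<forall>y\<in>V. \<delta> y = Var (k y)" by metis
  have "inj_on k V"
  proof (rule inj_onI)
    fix x y assume "x \<in> V" "y \<in> V" "k x = k y"
    then have "subst_trm \<delta>' (\<delta> x) = subst_trm \<delta>' (\<delta> y)" using k by simp
    then show "x = y" using inv \<open>x \<in> V\<close> \<open>y \<in> V\<close> by simp
  qed
  then obtain g where "bij g" "\<forall>y\<in>V. g y = k y" using inj_on_extends_to_bij assms(2) by blast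
  then show ?thesis using that k by auto
qed

lemma subst_goal_comp: "subst_goal \<tau> (subst_goal \<sigma> G) = subst_goal (subst_comp \<sigma> \<tau>) G"
  by (auto simp: subst_goal_def image_image subst_atom_comp split_def)

lemma shift_goal_comp: "shift_goal \<sigma> (shift_goal \<pi> G) = shift_goal (\<sigma> \<circ> \<pi>) G"
  by (auto simp: shift_goal_def image_image split_def)

lemma shift_subst_goal_commute: "shift_goal \<pi> (subst_goal \<sigma> G) = subst_goal \<sigma> (shift_goal \<pi> G)"
  by (auto simp: shift_goal_def subst_goal_def image_image split_def)

lemma subst_goal_Un: "subst_goal \<sigma> (A \<union> B) = subst_goal \<sigma> A \<union> subst_goal \<sigma> B"
  by (simp add: subst_goal_def image_Un)

lemma shift_goal_Un: "shift_goal \<sigma> (A \<union> B) = shift_goal \<sigma> A \<union> shift_goal \<sigma> B"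
  by (simp add: shift_goal_def image_Un)

lemma subst_goal_insert: "subst_goal \<sigma> (insert a A) = insert (subst_patom \<sigma> a) (subst_goal \<sigma> A)"
  by (simp add: subst_goal_def subst_patom_def split_def)

lemma shift_goal_insert: "shift_goal \<sigma> (insert a A) = insert (fst a, \<sigma> (snd a)) (shift_goal \<sigma> A)"
  by (simp add: shift_goal_def split_def)

lemma subst_goal_Var [simp]: "subst_goal Var G = G"
  by (simp add: subst_goal_def split_def)

lemma shift_goal_id [simp]: "shift_goal id G = G"
  by (simp add: shift_goal_def split_def)

lemma subst_goal_cong: "(\<And>x. x \<in> vars_goal G \<Longrightarrow> \<sigma> x = \<tau> x) \<Longrightarrow> subst_goal \<sigma> G = subst_goal \<tau> G"
  unfolding subst_goal_def vars_goal_def split_def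
  by (rule image_cong) (auto intro!: subst_atom_cong)

lemma shift_goal_cong: "(\<And>p. p \<in> prios G \<Longrightarrow> \<sigma> p = \<tau> p) \<Longrightarrow> shift_goal \<sigma> G = shift_goal \<tau> G"
  by (force simp: shift_goal_def prios_def split_def intro!: image_cong)

lemma vars_goal_subst: "vars_goal (subst_goal \<sigma> G) = (\<Union>x\<in>vars_goal G. vars_trm (\<sigma> x))"
  by (auto simp: vars_goal_def subst_goal_def vars_atom_subst split_def)

lemma vars_goal_ren [simp]: "vars_goal (subst_goal (ren f) G) = f ` vars_goal G"
  by (auto simp: vars_goal_subst ren_def)

lemma vars_goal_shift [simp]: "vars_goal (shift_goal \<pi> G) = vars_goal G"
  by (auto simp: vars_goal_def shift_goal_def split_def)

lemma finite_vars_goal [simp]: "finite G \<Longrightarrow> finite (vars_goal G)"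
  by (simp add: vars_goal_def)

lemma prios_subst_goal [simp]: "prios (subst_goal \<sigma> G) = prios G"
  by (force simp: prios_def subst_goal_def split_def image_image)

lemma prios_shift_goal [simp]: "prios (shift_goal \<pi> G) = \<pi> ` prios G"
  by (force simp: prios_def shift_goal_def split_def image_image)

lemma prios_Un [simp]: "prios (A \<union> B) = prios A \<union> prios B"
  by (simp add: prios_def image_Un)

lemma prios_empty [simp]: "prios {} = {}"
  by (simp add: prios_def)

lemma prios_insert: "prios (insert a A) = insert (snd a) (prios A)"
  by (simp add: prios_def)

lemma finite_subst_goal [simp]: "finite G \<Longrightarrow> finite (subst_goal \<sigma> G)"
  by (simp add: subst_goal_def)

lemma finite_shift_goal [simp]: "finite G \<Longrightarrow> finite (shift_goal \<sigma> G)"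
  by (simp add: shift_goal_def)

lemma subst_goal_ren_inv: "bij f \<Longrightarrow> subst_goal (ren (inv f)) (subst_goal (ren f) G) = G"
  by (simp add: subst_goal_comp subst_comp_ren bij_is_inj ren_id)

lemma shifting_id: "shifting id"
  by (simp add: shifting_def strict_mono_def)

lemma shifting_comp: "shifting \<sigma> \<Longrightarrow> shifting \<pi> \<Longrightarrow> shifting (\<sigma> \<circ> \<pi>)"
  by (auto simp: shifting_def strict_mono_def bij_comp)

lemma shifting_inj: "shifting \<sigma> \<Longrightarrow> inj \<sigma>"
  by (simp add: shifting_def bij_is_inj)

lemma shifting_inv: "shifting \<sigma> \<Longrightarrow> shifting (inv \<sigma>)"
  unfolding shifting_def
proof (intro conjI)
  assume \<sigma>: "strict_mono \<sigma> \<and> bij \<sigma>"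
  then show "bij (inv \<sigma>)" by (simp add: bij_imp_bij_inv)
  show "strict_mono (inv \<sigma>)"
  proof (rule strict_monoI)
    fix x y :: rat assume "x < y"
    have "\<sigma> (inv \<sigma> x) = x" "\<sigma> (inv \<sigma> y) = y" using \<sigma> by (simp_all add: bij_is_surj surj_f_inv_f)
    then show "inv \<sigma> x < inv \<sigma> y" using \<sigma> \<open>x < y\<close>
      by (metis not_less_iff_gr_or_eq strict_mono_less)
  qed
qed

lemma strict_mono_self_map_fixes:
  fixes \<sigma> :: "'a::linorder \<Rightarrow> 'a"
  assumes mono: "strict_mono \<sigma>" and "finite A" "\<sigma> ` A \<subseteq> A" "x \<in> A"
  shows "\<sigma> x = x"
proof -
  have "card (\<sigma> ` A) = card A" using mono by (simp add: card_image strict_mono_imp_inj_on)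
  then have image: "\<sigma> ` A = A" using assms(2,3) by (simp add: card_subset_eq)
  define xs where "xs = sorted_list_of_set A"
  have "sorted_wrt (<) (map \<sigma> xs)"
    using mono by (simp add: xs_def sorted_wrt_map strict_mono_less)
  then have "map \<sigma> xs = xs"
    using assms(2) image by (intro sorted_distinct_set_unique) (simp_all add: xs_def strict_sorted_iff)
  then show ?thesis using assms(2,4) map_eq_conv[of \<sigma> xs id] by (simp add: xs_def)
qed

lemma shift_goal_inv: "shifting \<sigma> \<Longrightarrow> shift_goal (inv \<sigma>) (shift_goal \<sigma> G) = G"
  by (simp add: shift_goal_comp shifting_inj)

lemma pgoal_split_unique:
  assumes "pgoal_split G a F" "pgoal_split G a' F'"
  shows "a' = a" "F' = F"
proof -
  show "a' = a"
  proof (rule ccontr)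
    assume "a' \<noteq> a"
    then have "a \<in> F'" "a' \<in> F" using assms by (auto simp: pgoal_split_def)
    then have "snd a' < snd a" "snd a < snd a'" using assms by (auto simp: pgoal_split_def)
    then show False by simp
  qed
  moreover have "F = G - {a}" "F' = G - {a'}" using assms by (auto simp: pgoal_split_def)
  ultimately show "F' = F" by simp
qed

lemma pgoal_split_map:
  assumes "pgoal_split G a F" "shifting \<sigma>"
  shows "pgoal_split (shift_goal \<sigma> (subst_goal lam G)) (subst_atom lam (fst a), \<sigma> (snd a))
           (shift_goal \<sigma> (subst_goal lam F))"
  unfolding pgoal_split_def
proof (intro conjI ballI)
  show "shift_goal \<sigma> (subst_goal lam G)
      = insert (subst_atom lam (fst a), \<sigma> (snd a)) (shift_goal \<sigma> (subst_goal lam F))"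
    using assms(1) by (simp add: pgoal_split_def subst_goal_insert shift_goal_insert subst_patom_def)
next
  fix q assume "q \<in> shift_goal \<sigma> (subst_goal lam F)"
  then obtain b p where "(b, p) \<in> F" "snd q = \<sigma> p"
    by (auto simp: shift_goal_def subst_goal_def)
  then show "snd (subst_atom lam (fst a), \<sigma> (snd a)) < snd q"
    using assms by (auto simp: pgoal_split_def shifting_def strict_mono_less)
qed

lemma is_pgoal_map:
  assumes "is_pgoal G" "shifting \<sigma>"
  shows "is_pgoal (shift_goal \<sigma> (subst_goal lam G))"
proof -
  let ?f = "\<lambda>(b, p). (subst_atom lam b, \<sigma> p)"
  have "inj_on snd (?f ` G)"
  proof (rule inj_onI)
    fix x y assume "x \<in> ?f ` G" "y \<in> ?f ` G" and eq: "snd x = snd y"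
    then obtain q1 q2 where q: "q1 \<in> G" "x = ?f q1" "q2 \<in> G" "y = ?f q2" by blast
    then have "snd q1 = snd q2" using eq shifting_inj[OF assms(2)] by (auto simp: split_def inj_eq)
    then have "q1 = q2" using q assms(1) by (auto simp: is_pgoal_def inj_on_def)
    then show "x = y" using q by simp
  qed
  moreover have "shift_goal \<sigma> (subst_goal lam G) = ?f ` G"
    by (auto simp: shift_goal_def subst_goal_def image_image split_def)
  ultimately show ?thesis using assms(1) by (simp add: is_pgoal_def)
qed

lemma shift_subst_goal_inv:
  assumes "bij g" "shifting \<sigma>"
  shows "shift_goal (inv \<sigma>) (subst_goal (ren (inv g)) (shift_goal \<sigma> (subst_goal (ren g) G))) = G"
  using assms by (simp add: shift_subst_goal_commute shift_goal_inv subst_goal_ren_inv)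

lemma shift_subst_goal_inv_on_vars:
  assumes f: "bij f" and \<sigma>: "shifting \<sigma>"
    and g: "\<forall>x\<in>vars_goal (subst_goal (ren f) G). g x = inv f x"
  shows "shift_goal (inv \<sigma>) (subst_goal (ren g) (shift_goal \<sigma> (subst_goal (ren f) G))) = G"
proof -
  have "shift_goal (inv \<sigma>) (subst_goal (ren g) (shift_goal \<sigma> (subst_goal (ren f) G)))
      = subst_goal (ren (g \<circ> f)) G"
    using \<sigma> by (simp add: shift_subst_goal_commute shift_goal_inv subst_goal_comp subst_comp_ren)
  also have "\<dots> = subst_goal Var G"
  proof (rule subst_goal_cong)
    fix x assume "x \<in> vars_goal G"
    then have "g (f x) = x" using f g by (simp add: bij_is_inj)
    then show "ren (g \<circ> f) x = Var x" by (simp add: ren_def)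
  qed
  finally show ?thesis by simp
qed

section \<open>Unifiers under renaming\<close>

definition conj_subst :: "('v \<Rightarrow> 'v) \<Rightarrow> ('f, 'v) subst \<Rightarrow> ('f, 'v) subst" where
  "conj_subst g \<theta> = (\<lambda>x. subst_trm (ren g) (\<theta> (inv g x)))"

lemma conj_subst_apply: "conj_subst g \<theta> x = subst_trm (ren g) (\<theta> (inv g x))"
  by (simp add: conj_subst_def)

lemma subst_comp_ren_conj_subst:
  "bij g \<Longrightarrow> subst_comp (ren g) (conj_subst g \<theta>) = subst_comp \<theta> (ren g)"
  by (simp add: fun_eq_iff subst_comp_def conj_subst_def ren_def bij_is_inj)

lemma subst_trm_conj_subst:
  "bij g \<Longrightarrow> subst_trm (conj_subst g \<theta>) (subst_trm (ren g) t) = subst_trm (ren g) (subst_trm \<theta> t)"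
  by (simp add: subst_trm_comp[symmetric] subst_comp_ren_conj_subst)

lemma subst_atom_conj_subst:
  "bij g \<Longrightarrow> subst_atom (conj_subst g \<theta>) (subst_atom (ren g) a) = subst_atom (ren g) (subst_atom \<theta> a)"
  by (simp add: subst_atom_comp[symmetric] subst_comp_ren_conj_subst)

lemma unifier_conj_subst_iff:
  "bij g \<Longrightarrow> unifier (conj_subst g \<theta>) (subst_atom (ren g) a) (subst_atom (ren g) b) \<longleftrightarrow> unifier \<theta> a b"
  by (simp add: unifier_def subst_atom_conj_subst subst_atom_ren_eq_iff)

lemma is_mgu_conj_subst:
  assumes g: "bij g" and mgu: "is_mgu \<theta> a b"
  shows "is_mgu (conj_subst g \<theta>) (subst_atom (ren g) a) (subst_atom (ren g) b)"
  unfolding is_mgu_def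
proof (intro conjI allI impI)
  show "unifier (conj_subst g \<theta>) (subst_atom (ren g) a) (subst_atom (ren g) b)"
    using mgu g by (simp add: unifier_conj_subst_iff is_mgu_def)
next
  fix \<sigma> assume "unifier \<sigma> (subst_atom (ren g) a) (subst_atom (ren g) b)"
  then have "unifier (subst_comp (ren g) \<sigma>) a b" by (simp add: unifier_def subst_atom_comp)
  then obtain \<delta> where \<delta>: "subst_comp (ren g) \<sigma> = subst_comp \<theta> \<delta>" using mgu by (auto simp: is_mgu_def)
  have ren_inv: "subst_comp (ren g) (subst_comp (ren (inv g)) \<delta>) = \<delta>"
    using g by (simp add: fun_eq_iff subst_comp_def ren_def bij_is_inj)
  have "\<sigma> x = subst_comp (conj_subst g \<theta>) (subst_comp (ren (inv g)) \<delta>) x" for x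
  proof -
    have "subst_comp (conj_subst g \<theta>) (subst_comp (ren (inv g)) \<delta>) x
        = subst_trm (subst_comp (ren (inv g)) \<delta>) (subst_trm (ren g) (\<theta> (inv g x)))"
      by (simp only: subst_comp_def conj_subst_apply)
    also have "\<dots> = subst_trm \<delta> (\<theta> (inv g x))"
      by (simp only: subst_trm_comp[symmetric] ren_inv)
    also have "\<dots> = \<sigma> x"
      using fun_cong[OF \<delta>, of "inv g x"] g
      by (simp add: ren_inv subst_comp_def ren_def bij_is_surj surj_f_inv_f)
    finally show ?thesis by simp
  qed
  then show "\<exists>\<delta>. \<sigma> = subst_comp (conj_subst g \<theta>) \<delta>" by blast
qed

lemma idempotent_conj_subst: "bij g \<Longrightarrow> idempotent \<theta> \<Longrightarrow> idempotent (conj_subst g \<theta>)"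
  unfolding idempotent_def
proof
  fix x assume g: "bij g" and idem: "subst_comp \<theta> \<theta> = \<theta>"
  have "subst_comp (conj_subst g \<theta>) (conj_subst g \<theta>) x
      = subst_trm (conj_subst g \<theta>) (conj_subst g \<theta> x)"
    by (simp only: subst_comp_def)
  also have "\<dots> = subst_trm (ren g) (subst_trm \<theta> (\<theta> (inv g x)))"
    using g by (simp add: conj_subst_apply subst_trm_conj_subst)
  also have "\<dots> = conj_subst g \<theta> x"
    using fun_cong[OF idem, of "inv g x"] by (simp add: subst_comp_def conj_subst_apply)
  finally show "subst_comp (conj_subst g \<theta>) (conj_subst g \<theta>) x = conj_subst g \<theta> x" .
qed

lemma subst_dom_conj_subst:
  assumes g: "bij g" shows "subst_dom (conj_subst g \<theta>) = g ` subst_dom \<theta>"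
proof -
  have "conj_subst g \<theta> x = Var x \<longleftrightarrow> \<theta> (inv g x) = Var (inv g x)" for x
    using subst_trm_ren_eq_iff[OF g, of "\<theta> (inv g x)" "Var (inv g x)"] g
    by (simp add: conj_subst_def ren_def bij_is_surj surj_f_inv_f)
  then show ?thesis using g by (simp add: subst_dom_def bij_image_Collect_eq)
qed

lemma subst_range_vars_conj_subst:
  "bij g \<Longrightarrow> subst_range_vars (conj_subst g \<theta>) = g ` subst_range_vars \<theta>"
  unfolding subst_range_vars_def
  by (simp add: subst_dom_conj_subst) (simp add: image_UN conj_subst_def bij_is_inj)

lemma relevant_conj_subst: "bij g \<Longrightarrow> relevant \<theta> a b \<Longrightarrow>
  relevant (conj_subst g \<theta>) (subst_atom (ren g) a) (subst_atom (ren g) b)"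
  unfolding relevant_def
  by (simp add: subst_dom_conj_subst subst_range_vars_conj_subst flip: image_Un)
     (rule image_mono, blast)

lemma is_mgu_unique_up_to_ren:
  assumes "is_mgu \<theta>1 a b" "is_mgu \<theta>2 a b" "finite G"
  obtains g where "bij g" "subst_goal \<theta>2 G = subst_goal (ren g) (subst_goal \<theta>1 G)"
proof -
  obtain \<delta>1 where \<delta>1: "\<theta>2 = subst_comp \<theta>1 \<delta>1" using assms(1,2) unfolding is_mgu_def by blast
  obtain \<delta>2 where \<delta>2: "\<theta>1 = subst_comp \<theta>2 \<delta>2" using assms(1,2) unfolding is_mgu_def by blast
  define V where "V = vars_goal (subst_goal \<theta>1 G)"
  have inv: "\<forall>y\<in>V. subst_trm \<delta>2 (\<delta>1 y) = Var y"
  proof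
    fix y assume y: "y \<in> V"
    obtain x where x: "y \<in> vars_trm (\<theta>1 x)" using y by (auto simp: V_def vars_goal_subst)
    have "\<theta>1 x = subst_trm \<delta>2 (\<theta>2 x)" using \<delta>2 by (simp add: subst_comp_def)
    also have "\<dots> = subst_trm \<delta>2 (subst_trm \<delta>1 (\<theta>1 x))" using \<delta>1 by (simp add: subst_comp_def)
    finally have "subst_trm (subst_comp \<delta>1 \<delta>2) (\<theta>1 x) = \<theta>1 x"
      unfolding subst_trm_comp by (rule sym)
    then have "subst_comp \<delta>1 \<delta>2 y = Var y" using x by (rule subst_trm_fixed_imp_Var)
    then show "subst_trm \<delta>2 (\<delta>1 y) = Var y" by (simp add: subst_comp_def)
  qed
  have "finite V" using assms(3) by (simp add: V_def)
  then obtain g where g: "bij g" "\<forall>y\<in>V. \<delta>1 y = Var (g y)"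
    using left_inverse_subst_imp_ren[OF inv] by blast
  have "subst_goal \<theta>2 G = subst_goal \<delta>1 (subst_goal \<theta>1 G)"
    by (simp add: \<delta>1 subst_goal_comp)
  also have "\<dots> = subst_goal (ren g) (subst_goal \<theta>1 G)"
    by (rule subst_goal_cong) (simp add: g(2) V_def ren_def)
  finally show ?thesis using that g(1) by blast
qed

section \<open>Variant p-goals\<close>

definition variant :: "('f, 'v) pgoal \<Rightarrow> ('f, 'v) pgoal \<Rightarrow> bool" where
  "variant A B \<longleftrightarrow> (\<exists>f \<sigma>. bij f \<and> shifting \<sigma> \<and> B = shift_goal \<sigma> (subst_goal (ren f) A))"

lemma variantI: "bij f \<Longrightarrow> shifting \<sigma> \<Longrightarrow> variant A (shift_goal \<sigma> (subst_goal (ren f) A))"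
  unfolding variant_def by blast

lemma variant_refl: "variant A A"
  using variantI[OF bij_id shifting_id, of A] by (simp add: ren_id)

lemma variant_sym: "variant A B \<Longrightarrow> variant B A"
  unfolding variant_def
  by (metis shift_subst_goal_inv bij_imp_bij_inv shifting_inv)

lemma variant_trans: "variant A B \<Longrightarrow> variant B C \<Longrightarrow> variant A C"
  unfolding variant_def
  by (metis (no_types) shift_subst_goal_commute shift_goal_comp subst_goal_comp subst_comp_ren
      bij_comp shifting_comp)

lemma card_variant: "variant A B \<Longrightarrow> card B = card A"
proof (elim variant_def[THEN iffD1, elim_format] exE conjE)
  fix f \<sigma> assume f: "bij f" and \<sigma>: "shifting \<sigma>" and B: "B = shift_goal \<sigma> (subst_goal (ren f) A)"
  let ?m = "\<lambda>(b, p). (subst_atom (ren f) b, \<sigma> p)"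
  have inj: "inj ?m"
    using f shifting_inj[OF \<sigma>] by (auto simp: inj_def subst_atom_ren_eq_iff inj_eq)
  have "B = ?m ` A"
    unfolding B by (auto simp: shift_goal_def subst_goal_def image_image split_def)
  then show "card B = card A" using card_image[OF inj_on_subset[OF inj subset_UNIV]] by simp
qed

section \<open>Steps of a scheduling rule\<close>

lemma step_facts:
  assumes "is_step s"
  shows "is_pgoal (st_src s)" "is_clause (st_clause s)" "renaming (st_ren s)" "shifting (st_shift s)"
    "vars_goal (st_src s) \<inter> vars_clause (renamed_clause s) = {}"
  using assms by (auto simp: is_step_def Let_def renamed_clause_def)

lemma is_stepE:
  assumes "is_step s"
  obtains a F where "pgoal_split (st_src s) a F"
    "is_mgu (st_mgu s) (fst a) (subst_atom (st_ren s) (fst (st_clause s)))"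
    "st_tgt s = subst_goal (st_mgu s)
       (F \<union> shift_goal (st_shift s) (subst_goal (st_ren s) (snd (st_clause s))))"
  using assms by (auto simp: is_step_def Let_def)

lemma subst_clause_comp: "subst_clause (subst_comp \<xi> \<tau>) c = subst_clause \<tau> (subst_clause \<xi> c)"
  by (simp add: subst_clause_def subst_atom_comp subst_goal_comp)

lemma subst_clause_cong:
  "(\<And>x. x \<in> vars_clause c \<Longrightarrow> \<sigma> x = \<tau> x) \<Longrightarrow> subst_clause \<sigma> c = subst_clause \<tau> c"
  unfolding subst_clause_def vars_clause_def
  by (metis Un_iff subst_atom_cong subst_goal_cong)

lemma vars_clause_ren: "vars_clause (subst_clause (ren g) c) = g ` vars_clause c"
  by (simp add: vars_clause_def subst_clause_def image_Un)

lemma finite_vars_clause: "is_clause c \<Longrightarrow> finite (vars_clause c)"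
  by (simp add: is_clause_def is_pgoal_def vars_clause_def)

lemma finite_vars_renamed_clause: "is_step s \<Longrightarrow> finite (vars_clause (renamed_clause s))"
  by (cases "st_clause s")
     (auto dest!: step_facts(2) simp: is_clause_def is_pgoal_def vars_clause_def subst_clause_def
       renamed_clause_def)

definition variant_step :: "('v \<Rightarrow> 'v) \<Rightarrow> (rat \<Rightarrow> rat) \<Rightarrow> ('f, 'v) pstep \<Rightarrow> ('f, 'v) pstep" where
  "variant_step g \<sigma> s = PStep (shift_goal \<sigma> (subst_goal (ren g) (st_src s))) (st_clause s)
     (subst_comp (st_ren s) (ren g)) (conj_subst g (st_mgu s)) (\<sigma> \<circ> st_shift s)
     (shift_goal \<sigma> (subst_goal (ren g) (st_tgt s)))"

lemma variant_step_sel [simp]: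
  "st_src (variant_step g \<sigma> s) = shift_goal \<sigma> (subst_goal (ren g) (st_src s))"
  "st_clause (variant_step g \<sigma> s) = st_clause s"
  "st_ren (variant_step g \<sigma> s) = subst_comp (st_ren s) (ren g)"
  "st_mgu (variant_step g \<sigma> s) = conj_subst g (st_mgu s)"
  "st_shift (variant_step g \<sigma> s) = \<sigma> \<circ> st_shift s"
  "st_tgt (variant_step g \<sigma> s) = shift_goal \<sigma> (subst_goal (ren g) (st_tgt s))"
  by (simp_all add: variant_step_def)

lemma renamed_clause_variant_step:
  "renamed_clause (variant_step g \<sigma> s) = subst_clause (ren g) (renamed_clause s)"
  by (simp add: renamed_clause_def subst_clause_comp)

lemma variant_step_inv:
  fixes s :: "('f, 'v) pstep"
  assumes g: "bij g" and \<sigma>: "shifting \<sigma>"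
  shows "variant_step (inv g) (inv \<sigma>) (variant_step g \<sigma> s) = s"
proof -
  have "subst_comp (subst_comp \<xi> (ren g)) (ren (inv g)) = \<xi>" for \<xi> :: "('f, 'v) subst"
    using g by (simp add: subst_comp_assoc subst_comp_ren bij_is_inj ren_id)
  moreover have "conj_subst (inv g) (conj_subst g \<theta>) = \<theta>" for \<theta> :: "('f, 'v) subst"
    using g by (simp add: fun_eq_iff conj_subst_apply inv_inv_eq bij_is_inj subst_trm_ren_inv)
  ultimately show ?thesis
    using assms by (cases s) (simp add: variant_step_def shift_subst_goal_inv o_assoc
        shifting_inj)
qed

lemma is_step_variant_step:
  fixes s :: "('f, 'v) pstep"
  assumes g: "bij g" and \<sigma>: "shifting \<sigma>" and st: "is_step s"
  shows "is_step (variant_step g \<sigma> s)"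
proof -
  obtain G c \<xi> \<theta> \<pi> T where s: "s = PStep G c \<xi> \<theta> \<pi> T" by (cases s)
  obtain h B where c: "c = (h, B)" by (cases c)
  from st obtain a F where
    base: "is_pgoal G" "is_clause c" "renaming \<xi>" "shifting \<pi>"
      "vars_goal G \<inter> vars_clause (subst_clause \<xi> c) = {}" and
    split: "pgoal_split G a F" and
    mgu: "idempotent \<theta>" "is_mgu \<theta> (fst a) (subst_atom \<xi> h)" "relevant \<theta> (fst a) (subst_atom \<xi> h)" and
    prios: "prios F \<inter> prios (shift_goal \<pi> (subst_goal \<xi> B)) = {}" and
    T: "T = subst_goal \<theta> (F \<union> shift_goal \<pi> (subst_goal \<xi> B))"
    by (auto simp: is_step_def Let_def s c)
  let ?R = "ren g :: ('f, 'v) subst" and ?F = "shift_goal \<sigma> (subst_goal (ren g) F)"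
  obtain f where "bij f" "\<xi> = ren f" using base(3) renaming_iff_ren by blast
  then have "renaming (subst_comp \<xi> ?R)"
    unfolding renaming_iff_ren using g by (auto simp: subst_comp_ren intro!: exI[of _ "g \<circ> f"] bij_comp)
  moreover have "vars_goal (shift_goal \<sigma> (subst_goal ?R G))
      \<inter> vars_clause (subst_clause (subst_comp \<xi> ?R) c) = {}"
    using base(5) by (simp add: subst_clause_comp vars_clause_ren flip: image_Int[OF bij_is_inj[OF g]])
  moreover have B: "shift_goal (\<sigma> \<circ> \<pi>) (subst_goal (subst_comp \<xi> ?R) B)
      = shift_goal \<sigma> (subst_goal ?R (shift_goal \<pi> (subst_goal \<xi> B)))"
    by (simp add: shift_goal_comp[symmetric] subst_goal_comp[symmetric] shift_subst_goal_commute)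
  moreover have "prios ?F \<inter> prios (shift_goal (\<sigma> \<circ> \<pi>) (subst_goal (subst_comp \<xi> ?R) B)) = {}"
    unfolding B using prios shifting_inj[OF \<sigma>] by (simp flip: image_Int)
  moreover have "shift_goal \<sigma> (subst_goal ?R T)
      = subst_goal (conj_subst g \<theta>) (?F \<union> shift_goal (\<sigma> \<circ> \<pi>) (subst_goal (subst_comp \<xi> ?R) B))"
    unfolding B using g
    by (simp add: T shift_goal_Un subst_goal_Un shift_subst_goal_commute subst_goal_comp
        subst_comp_assoc subst_comp_ren_conj_subst)
  moreover note is_pgoal_map[OF base(1) \<sigma>] shifting_comp[OF \<sigma> base(4)] pgoal_split_map[OF split \<sigma>]
    idempotent_conj_subst[OF g mgu(1)] is_mgu_conj_subst[OF g mgu(2)] relevant_conj_subst[OF g mgu(3)]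
  ultimately show ?thesis
    using base(2) unfolding is_step_def Let_def variant_step_def s c pstep.sel fst_conv snd_conv
    by (intro conjI exI[where x="(subst_atom ?R (fst a), \<sigma> (snd a))"] exI[where x="?F"])
       (simp_all add: subst_atom_comp)
qed

lemma congruent_lowering_variant_step:
  assumes g: "bij g" and \<sigma>: "shifting \<sigma>" and st: "is_step s"
  shows "congruent_lowering (variant_step g \<sigma> s) s"
proof -
  obtain a F where split: "pgoal_split (st_src s) a F" using is_stepE[OF st] by blast
  have "lowering_wit {} a F (ren g) \<sigma> (variant_step g \<sigma> s) s"
    unfolding lowering_wit_def
    using st is_step_variant_step[OF g \<sigma> st] \<sigma> split pgoal_split_map[OF split \<sigma>, of "ren g"]
    by (simp add: apfst_def apsnd_def map_prod_def split_def)
  moreover have "shift_goal \<sigma> (shift_goal (st_shift s) (snd (st_clause s)))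
      = shift_goal (st_shift (variant_step g \<sigma> s)) (snd (st_clause s))"
    by (simp add: shift_goal_comp)
  ultimately show ?thesis unfolding congruent_lowering_def using \<sigma> by blast
qed

lemma variant_step_in_scheduling_rule:
  assumes S: "scheduling_rule S" and s: "s \<in> S" and g: "bij g" and \<sigma>: "shifting \<sigma>"
  shows "variant_step g \<sigma> s \<in> S"
proof -
  have st: "is_step s" using S s by (simp add: scheduling_rule_def)
  have "congruent_lowering s (variant_step g \<sigma> s)"
    using congruent_lowering_variant_step[OF bij_imp_bij_inv[OF g] shifting_inv[OF \<sigma>]
        is_step_variant_step[OF g \<sigma> st]]
    by (simp add: variant_step_inv[OF g \<sigma>])
  then have "mutual_congruent_lowering (variant_step g \<sigma> s) s"
    using congruent_lowering_variant_step[OF g \<sigma> st] by (simp add: mutual_congruent_lowering_def)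
  then show ?thesis using S s by (simp add: scheduling_rule_def complete_steps_def)
qed

lemma lowering_same_source:
  assumes "is_step s1" "is_step s2" "st_src s1 = st_src s2" "st_clause s1 = st_clause s2"
  shows "lowering s2 s1"
proof -
  obtain a F where "pgoal_split (st_src s1) a F" using is_stepE[OF assms(1)] by blast
  then have "lowering_wit {} a F Var id s2 s1"
    unfolding lowering_wit_def using assms shifting_id
    by (simp add: apfst_def apsnd_def map_prod_def split_def fun_eq_iff)
  then show ?thesis unfolding lowering_def lowering_by_def by blast
qed

text \<open>The shifting of a lowering with the same source maps the finite set of priorities of the
  source into itself, so it is the identity there.\<close>
lemma congruent_lowering_same_source:
  assumes "congruent_lowering s2 s1" "st_src s2 = st_src s1" "pgoal_split (st_src s1) a F"
  obtains \<rho> where "shifting \<rho>" "shift_goal \<rho> F = F"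
    "shift_goal \<rho> (shift_goal (st_shift s1) (snd (st_clause s1)))
       = shift_goal (st_shift s2) (snd (st_clause s1))"
proof -
  obtain X a' K lam \<sigma> \<rho> where lw: "lowering_wit X a' K lam \<sigma> s2 s1" and \<rho>: "shifting \<rho>"
    "shift_goal \<rho> K = shift_goal \<sigma> K"
    "shift_goal \<rho> (shift_goal (st_shift s1) (snd (st_clause s1)))
       = shift_goal (st_shift s2) (snd (st_clause s1))"
    using assms(1) unfolding congruent_lowering_def by blast
  let ?G = "st_src s1"
  have split: "pgoal_split ?G a' K" and \<sigma>: "shifting \<sigma>" and "is_step s1"
    and split': "pgoal_split ?G (apfst (subst_atom lam) (apsnd \<sigma> a')) (shift_goal \<sigma> (subst_goal lam K) \<union> X)"
    using lw assms(2) by (simp_all add: lowering_wit_def)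
  have K: "K = F" using pgoal_split_unique[OF assms(3) split] by simp
  have "prios ?G = insert (snd a') (prios K)"
    using split by (simp add: pgoal_split_def prios_insert)
  moreover have "prios ?G = insert (\<sigma> (snd a')) (\<sigma> ` prios K \<union> prios X)"
    using split' by (cases a') (simp add: pgoal_split_def prios_insert)
  ultimately have into: "\<sigma> ` prios ?G \<subseteq> prios ?G" by auto
  have fin: "finite (prios ?G)"
    using step_facts(1)[OF \<open>is_step s1\<close>] by (simp add: is_pgoal_def prios_def)
  have "prios K \<subseteq> prios ?G" using split by (auto simp: pgoal_split_def prios_def)
  then have "\<sigma> p = p" if "p \<in> prios K" for p
    using strict_mono_self_map_fixes[OF _ fin into] \<sigma> that by (auto simp: shifting_def)
  then have "shift_goal \<sigma> K = shift_goal id K" by (intro shift_goal_cong) simp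
  then show ?thesis using that \<rho> K by simp
qed

lemma scheduling_rule_same_source_shifts:
  assumes S: "scheduling_rule S" and "s1 \<in> S" "s2 \<in> S"
    and src: "st_src s2 = st_src s1" and cl: "st_clause s2 = st_clause s1"
    and split: "pgoal_split (st_src s1) a F"
  obtains \<rho> where "shifting \<rho>" "shift_goal \<rho> F = F"
    "shift_goal \<rho> (shift_goal (st_shift s1) (snd (st_clause s1)))
       = shift_goal (st_shift s2) (snd (st_clause s1))"
proof -
  have st1: "is_step s1" and st2: "is_step s2" using S assms(2,3) by (auto simp: scheduling_rule_def)
  have "mutual_lowering s1 s2"
    using lowering_same_source[OF st1 st2 src[symmetric] cl[symmetric]]
      lowering_same_source[OF st2 st1 src cl] by (simp add: mutual_lowering_def)
  then have "congruent_lowering s2 s1"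
    using S assms(2,3) by (simp add: scheduling_rule_def deterministic_def mutual_congruent_lowering_def)
  then show ?thesis using congruent_lowering_same_source[OF _ src split] that by blast
qed

lemma scheduling_rule_same_renamed_clause_variant_targets:
  fixes s1 s2 :: "('f, 'v) pstep"
  assumes S: "scheduling_rule S" and "s1 \<in> S" "s2 \<in> S"
    and src: "st_src s2 = st_src s1" and cl: "st_clause s2 = st_clause s1"
    and rc: "renamed_clause s2 = renamed_clause s1"
  shows "variant (st_tgt s1) (st_tgt s2)"
proof -
  have st1: "is_step s1" and st2: "is_step s2" using S assms(2,3) by (auto simp: scheduling_rule_def)
  obtain h B where c: "st_clause s1 = (h, B)" by fastforce
  have ren: "subst_atom (st_ren s2) h = subst_atom (st_ren s1) h"
    "subst_goal (st_ren s2) B = subst_goal (st_ren s1) B"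
    using rc cl by (simp_all add: renamed_clause_def subst_clause_def c)
  obtain a F where split: "pgoal_split (st_src s1) a F"
    and mgu1: "is_mgu (st_mgu s1) (fst a) (subst_atom (st_ren s1) h)"
    and T1: "st_tgt s1 = subst_goal (st_mgu s1) (F \<union> shift_goal (st_shift s1) (subst_goal (st_ren s1) B))"
    using is_stepE[OF st1] unfolding c fst_conv snd_conv by blast
  obtain a2 F2 where split2: "pgoal_split (st_src s1) a2 F2"
    and mgu2: "is_mgu (st_mgu s2) (fst a2) (subst_atom (st_ren s2) h)"
    and T2: "st_tgt s2 = subst_goal (st_mgu s2) (F2 \<union> shift_goal (st_shift s2) (subst_goal (st_ren s2) B))"
    using is_stepE[OF st2] unfolding cl src c fst_conv snd_conv by blast
  have a2: "a2 = a" "F2 = F" using pgoal_split_unique[OF split split2] by simp_all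
  obtain \<rho> where \<rho>: "shifting \<rho>" "shift_goal \<rho> F = F"
    "shift_goal \<rho> (shift_goal (st_shift s1) B) = shift_goal (st_shift s2) B"
    using scheduling_rule_same_source_shifts[OF S assms(2,3) src cl split] unfolding c snd_conv .
  define Q where "Q = F \<union> shift_goal (st_shift s1) (subst_goal (st_ren s1) B)"
  have tgt2: "st_tgt s2 = shift_goal \<rho> (subst_goal (st_mgu s2) Q)"
    using \<rho>(2,3) by (simp add: T2 a2 ren Q_def shift_goal_Un shift_subst_goal_commute)
  have "finite Q"
    using step_facts(1,2)[OF st1] split by (auto simp: Q_def c is_pgoal_def is_clause_def pgoal_split_def)
  moreover have "is_mgu (st_mgu s2) (fst a) (subst_atom (st_ren s1) h)" using mgu2 a2 ren by simp
  ultimately obtain g where g: "bij g"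
    "subst_goal (st_mgu s2) Q = subst_goal (ren g) (subst_goal (st_mgu s1) Q)"
    using is_mgu_unique_up_to_ren[OF mgu1] by blast
  then have "st_tgt s2 = shift_goal \<rho> (subst_goal (ren g) (st_tgt s1))"
    using tgt2 T1 by (simp add: Q_def)
  then show ?thesis using variantI[OF g(1) \<rho>(1)] by simp
qed

text \<open>Renaming the clause of \<open>s1\<close> like that of \<open>s2\<close>, while fixing the variables of the
  common source, reduces to equal renamed clauses.\<close>
lemma scheduling_rule_same_source_variant_targets:
  fixes s1 s2 :: "('f, 'v) pstep"
  assumes S: "scheduling_rule S" and s1: "s1 \<in> S" and s2: "s2 \<in> S"
    and src: "st_src s1 = st_src s2" and cl: "st_clause s1 = st_clause s2"
  shows "variant (st_tgt s1) (st_tgt s2)"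
proof -
  have st1: "is_step s1" and st2: "is_step s2" using S s1 s2 by (auto simp: scheduling_rule_def)
  obtain h1 where h1: "bij h1" "st_ren s1 = ren h1"
    using step_facts(3)[OF st1] renaming_iff_ren by blast
  obtain h2 where h2: "bij h2" "st_ren s2 = ren h2"
    using step_facts(3)[OF st2] renaming_iff_ren by blast
  define V where "V = vars_goal (st_src s2)"
  define C where "C = vars_clause (st_clause s2)"
  have disj: "V \<inter> h1 ` C = {}" "V \<inter> h2 ` C = {}"
    using step_facts(5)[OF st1] step_facts(5)[OF st2] src cl h1(2) h2(2)
    by (simp_all add: V_def C_def renamed_clause_def vars_clause_ren)
  have fin: "finite V" "finite C"
    using step_facts(1,2)[OF st2] by (simp_all add: V_def C_def is_pgoal_def finite_vars_clause)
  obtain g where g: "bij g" "\<forall>x\<in>V. g x = x" "\<forall>x\<in>C. g (h1 x) = h2 x"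
    using bij_fixing_and_transferring[OF fin h1(1) h2(1) disj] .
  define s1' where "s1' = variant_step g id s1"
  have "s1' \<in> S" using variant_step_in_scheduling_rule[OF S s1 g(1) shifting_id] by (simp add: s1'_def)
  moreover have "st_src s2 = st_src s1'"
  proof -
    have "subst_goal (ren g) (st_src s2) = subst_goal Var (st_src s2)"
      by (rule subst_goal_cong) (simp add: g(2) V_def ren_def)
    then show ?thesis using src by (simp add: s1'_def)
  qed
  moreover have "st_clause s2 = st_clause s1'" using cl by (simp add: s1'_def)
  moreover have "renamed_clause s2 = renamed_clause s1'"
  proof -
    have "subst_clause (ren (g \<circ> h1)) (st_clause s2) = subst_clause (ren h2) (st_clause s2)"
      by (rule subst_clause_cong) (simp add: g(3) C_def ren_def)
    then show ?thesis using cl h1(2) h2(2) by (simp add: s1'_def renamed_clause_def subst_comp_ren)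
  qed
  ultimately have "variant (st_tgt s1') (st_tgt s2)"
    using scheduling_rule_same_renamed_clause_variant_targets[OF S _ s2] by blast
  moreover have "variant (st_tgt s1) (st_tgt s1')"
    using variantI[OF g(1) shifting_id] by (simp add: s1'_def)
  ultimately show ?thesis using variant_trans by blast
qed

lemma scheduling_rule_variant_targets:
  fixes s1 s2 :: "('f, 'v) pstep"
  assumes S: "scheduling_rule S" and s1: "s1 \<in> S" and s2: "s2 \<in> S"
    and cl: "st_clause s2 = st_clause s1" and "variant (st_src s1) (st_src s2)"
  shows "variant (st_tgt s1) (st_tgt s2)"
proof -
  obtain f \<sigma> where f: "bij f" "shifting \<sigma>"
    and src2: "st_src s2 = shift_goal \<sigma> (subst_goal (ren f) (st_src s1))"
    using assms(5) unfolding variant_def by blast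
  let ?s1' = "variant_step f \<sigma> s1"
  have "variant (st_tgt ?s1') (st_tgt s2)"
    using variant_step_in_scheduling_rule[OF S s1 f] src2 cl
    by (intro scheduling_rule_same_source_variant_targets[OF S _ s2]) simp_all
  moreover have "variant (st_tgt s1) (st_tgt ?s1')" using variantI[OF f] by simp
  ultimately show ?thesis using variant_trans by blast
qed

section \<open>Derivations\<close>

lemma goal_at_cong: "k \<le> n \<Longrightarrow> (\<And>i. i < n \<Longrightarrow> d i = e i) \<Longrightarrow> goal_at G0 d k = goal_at G0 e k"
  by (cases k) auto

lemma pSLD_cong:
  assumes "\<And>i. i < n \<Longrightarrow> d i = e i"
  shows "pSLD P S G0 (enat n) d \<longleftrightarrow> pSLD P S G0 (enat n) e"
proof -
  have "d j = e j" "goal_at G0 d j = goal_at G0 e j"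
    "(\<Union>i<j. vars_clause (renamed_clause (d i))) = (\<Union>i<j. vars_clause (renamed_clause (e i)))"
    if "j < n" for j
    using assms that goal_at_cong[of j n d e G0] by auto
  then show ?thesis unfolding pSLD_def by simp
qed

lemma pSLD_mono: "pSLD P S G0 n d \<Longrightarrow> m \<le> n \<Longrightarrow> pSLD P S G0 m d"
  unfolding pSLD_def using order.strict_trans2 by blast

lemma pSLD_infinite_iff: "pSLD P S G0 \<infinity> d \<longleftrightarrow> (\<forall>n. pSLD P S G0 (enat n) d)"
proof
  assume "\<forall>n. pSLD P S G0 (enat n) d"
  then show "pSLD P S G0 \<infinity> d" unfolding pSLD_def by (meson enat_ord_simps(2) lessI)
qed (simp add: pSLD_def)

lemma pSLD_stepD:
  assumes "pSLD P S G0 (enat n) d" "j < n"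
  shows "is_step (d j)" "d j \<in> S" "st_clause (d j) \<in> P" "st_src (d j) = goal_at G0 d j"
  using assms by (simp_all add: pSLD_def)

lemma finite_vars_pSLD:
  "pSLD P S G0 (enat n) d \<Longrightarrow> finite (\<Union>i<n. vars_clause (renamed_clause (d i)))"
  by (simp add: finite_vars_renamed_clause pSLD_stepD(1))

lemma pSLD_snoc:
  assumes d: "pSLD P S G0 (enat n) d" and s: "is_step s" "s \<in> S" "st_clause s \<in> P"
    "st_src s = goal_at G0 d n"
    and fresh: "vars_clause (renamed_clause s) \<inter>
      (vars_goal G0 \<union> (\<Union>i<n. vars_clause (renamed_clause (d i)))) = {}"
  shows "pSLD P S G0 (enat (Suc n)) (d(n := s))"
  unfolding pSLD_def
proof (intro allI impI)
  fix j assume "enat j < enat (Suc n)"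
  then have j: "j \<le> n" by simp
  have "goal_at G0 (d(n := s)) j = goal_at G0 d j" using j by (intro goal_at_cong) auto
  moreover have "(\<Union>i<j. vars_clause (renamed_clause ((d(n := s)) i)))
      = (\<Union>i<j. vars_clause (renamed_clause (d i)))" using j by auto
  moreover have "j < n \<Longrightarrow> enat j < enat n" by simp
  ultimately show "is_step ((d(n := s)) j) \<and> (d(n := s)) j \<in> S \<and> st_clause ((d(n := s)) j) \<in> P \<and>
      st_src ((d(n := s)) j) = goal_at G0 (d(n := s)) j \<and>
      vars_clause (renamed_clause ((d(n := s)) j)) \<inter>
        (vars_goal G0 \<union> (\<Union>i<j. vars_clause (renamed_clause ((d(n := s)) i)))) = {}"
    using d s fresh j by (cases "j = n") (auto simp: pSLD_def)
qed

text \<open>The step is transported back along the variance, renaming its clause apart from all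
  variables used so far.\<close>
lemma pSLD_extend_by_variant_step:
  fixes d :: "nat \<Rightarrow> ('f, 'v) pstep"
  assumes inf: "infinite (UNIV :: 'v set)" and S: "scheduling_rule S" and G0: "is_pgoal G0"
    and d: "pSLD P S G0 (enat n) d" and s: "s \<in> S" "st_clause s \<in> P"
    and variant: "variant (goal_at G0 d n) (st_src s)"
  obtains s' where "pSLD P S G0 (enat (Suc n)) (d(n := s'))" "st_clause s' = st_clause s"
    "variant (st_tgt s) (st_tgt s')"
proof -
  obtain f \<sigma> where f: "bij f" and \<sigma>: "shifting \<sigma>"
    and src: "st_src s = shift_goal \<sigma> (subst_goal (ren f) (goal_at G0 d n))"
    using variant unfolding variant_def by blast
  have st: "is_step s" using S s by (simp add: scheduling_rule_def)
  define A where "A = vars_goal (st_src s)"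
  define B where "B = vars_clause (renamed_clause s)"
  define Y where "Y = vars_goal G0 \<union> (\<Union>i<n. vars_clause (renamed_clause (d i)))"
  have AB: "finite A" "finite B" "A \<inter> B = {}"
    using step_facts(1,5)[OF st] finite_vars_renamed_clause[OF st] by (auto simp: A_def B_def is_pgoal_def)
  have "finite Y" using G0 finite_vars_pSLD[OF d] by (simp add: Y_def is_pgoal_def)
  moreover have "inj_on (inv f) A"
    using inj_on_subset[OF bij_is_inj[OF bij_imp_bij_inv[OF f]] subset_UNIV] .
  ultimately obtain g where g: "bij g" "\<forall>x\<in>A. g x = inv f x" "g ` B \<inter> Y = {}"
    using inj_on_extends_to_bij_fresh[OF inf AB] by blast
  define s' where "s' = variant_step g (inv \<sigma>) s"
  have s': "s' \<in> S" "is_step s'"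
    using variant_step_in_scheduling_rule[OF S s(1) g(1) shifting_inv[OF \<sigma>]]
      is_step_variant_step[OF g(1) shifting_inv[OF \<sigma>] st] by (simp_all add: s'_def)
  have "st_src s' = goal_at G0 d n"
    using shift_subst_goal_inv_on_vars[OF f \<sigma>] g(2) by (simp add: s'_def src A_def)
  moreover have "vars_clause (renamed_clause s') \<inter> Y = {}"
    using g(3) by (simp add: s'_def renamed_clause_variant_step vars_clause_ren B_def)
  ultimately have "pSLD P S G0 (enat (Suc n)) (d(n := s'))"
    using pSLD_snoc[OF d s'(2,1)] s(2) by (simp add: s'_def Y_def)
  moreover have "variant (st_tgt s) (st_tgt s')"
    using variantI[OF g(1) shifting_inv[OF \<sigma>]] by (simp add: s'_def)
  ultimately show ?thesis using that by (simp add: s'_def)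
qed

lemma pSLD_same_clauses_variant_goals:
  assumes S: "scheduling_rule S"
    and d1: "pSLD P S G0 (enat n1) d1" and d2: "pSLD P S G0 (enat n2) d2"
  shows "k \<le> n1 \<Longrightarrow> k \<le> n2 \<Longrightarrow> \<forall>i<k. st_clause (d1 i) = st_clause (d2 i) \<Longrightarrow>
    variant (goal_at G0 d1 k) (goal_at G0 d2 k)"
proof (induction k)
  case 0
  then show ?case by (simp add: variant_refl)
next
  case (Suc k)
  then have k: "k < n1" "k < n2" by simp_all
  have "variant (goal_at G0 d1 k) (goal_at G0 d2 k)" using Suc by simp
  then have "variant (st_src (d1 k)) (st_src (d2 k))"
    using pSLD_stepD(4)[OF d1 k(1)] pSLD_stepD(4)[OF d2 k(2)] by simp
  moreover have "st_clause (d2 k) = st_clause (d1 k)" using Suc.prems by simp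
  ultimately show ?case
    using scheduling_rule_variant_targets[OF S pSLD_stepD(2)[OF d1 k(1)] pSLD_stepD(2)[OF d2 k(2)]]
    by simp
qed

text \<open>Cutting out the segment between two variant goals: the steps after the second one are
  replayed, up to variance, from the first one.\<close>
lemma pSLD_cut_variant_segment:
  assumes inf: "infinite (UNIV :: 'v set)" and S: "scheduling_rule S" and G0: "is_pgoal G0"
    and d: "pSLD P S G0 (enat m) d" and ij: "i < j" "j \<le> m"
    and variant: "variant (goal_at G0 d i) (goal_at G0 d j)"
  obtains d' :: "nat \<Rightarrow> ('f, 'v) pstep" where "pSLD P S G0 (enat (i + (m - j))) d'"
    "variant (goal_at G0 d' (i + (m - j))) (goal_at G0 d m)"
proof -
  have "\<exists>e. pSLD P S G0 (enat (i + t)) e \<and> variant (goal_at G0 e (i + t)) (goal_at G0 d (j + t))"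
    if "t \<le> m - j" for t
    using that
  proof (induction t)
    case 0
    show ?case using ij variant by (intro exI[of _ d] conjI pSLD_mono[OF d]) auto
  next
    case (Suc t)
    then obtain e where e: "pSLD P S G0 (enat (i + t)) e"
      "variant (goal_at G0 e (i + t)) (goal_at G0 d (j + t))" by auto
    have "j + t < m" using Suc.prems ij by simp
    then have "d (j + t) \<in> S" "st_clause (d (j + t)) \<in> P"
      "variant (goal_at G0 e (i + t)) (st_src (d (j + t)))"
      using pSLD_stepD[OF d] e(2) by simp_all
    then obtain s' where s': "pSLD P S G0 (enat (Suc (i + t))) (e(i + t := s'))"
      "variant (st_tgt (d (j + t))) (st_tgt s')"
      using pSLD_extend_by_variant_step[OF inf S G0 e(1)] by metis
    show ?case
    proof (intro exI conjI)
      show "pSLD P S G0 (enat (i + Suc t)) (e(i + t := s'))" using s'(1) by simp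
      show "variant (goal_at G0 (e(i + t := s')) (i + Suc t)) (goal_at G0 d (j + Suc t))"
        using variant_sym[OF s'(2)] by simp
    qed
  qed
  then obtain e where e: "pSLD P S G0 (enat (i + (m - j))) e"
    "variant (goal_at G0 e (i + (m - j))) (goal_at G0 d (j + (m - j)))"
    by blast
  have "j + (m - j) = m" using ij by simp
  then show ?thesis using that[OF e(1)] e(2) by simp
qed

definition variant_free :: "('f, 'v) pgoal \<Rightarrow> (nat \<Rightarrow> ('f, 'v) pstep) \<Rightarrow> nat \<Rightarrow> bool" where
  "variant_free G0 d n \<longleftrightarrow> (\<forall>i j. i < j \<and> j \<le> n \<longrightarrow> \<not> variant (goal_at G0 d i) (goal_at G0 d j))"

lemma variant_free_mono: "variant_free G0 d n \<Longrightarrow> m \<le> n \<Longrightarrow> variant_free G0 d m"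
  by (simp add: variant_free_def)

lemma pSLD_goal_variant_of_variant_free:
  assumes inf: "infinite (UNIV :: 'v set)" and S: "scheduling_rule S" and G0: "is_pgoal G0"
    and d: "pSLD P S G0 (enat m) (d :: nat \<Rightarrow> ('f, 'v) pstep)"
  obtains d' m' where "pSLD P S G0 (enat m') d'" "variant_free G0 d' m'"
    "variant (goal_at G0 d' m') (goal_at G0 d m)"
  using d
proof (induction m arbitrary: d rule: less_induct)
  case (less m)
  show ?case
  proof (cases "variant_free G0 d m")
    case True
    then show ?thesis using less.prems(1)[OF less.prems(2) _ variant_refl] by blast
  next
    case False
    then obtain i j where ij: "i < j" "j \<le> m" "variant (goal_at G0 d i) (goal_at G0 d j)"
      by (auto simp: variant_free_def)
    obtain d' where d': "pSLD P S G0 (enat (i + (m - j))) d'"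
      "variant (goal_at G0 d' (i + (m - j))) (goal_at G0 d m)"
      using pSLD_cut_variant_segment[OF inf S G0 less.prems(2) ij] .
    have "i + (m - j) < m" using ij by simp
    then show ?thesis
    proof (rule less.IH[OF _ _ d'(1)])
      fix d'' m'' assume "pSLD P S G0 (enat m'') d''" "variant_free G0 d'' m''"
        "variant (goal_at G0 d'' m'') (goal_at G0 d' (i + (m - j)))"
      then show thesis using less.prems(1) variant_trans[OF _ d'(2)] by blast
    qed
  qed
qed

lemma card_step_tgt_le:
  assumes st: "is_step s"
  shows "card (st_tgt s) \<le> card (st_src s) + card (snd (st_clause s))"
proof -
  let ?B = "snd (st_clause s)"
  obtain a F where "pgoal_split (st_src s) a F"
    and T: "st_tgt s = subst_goal (st_mgu s) (F \<union> shift_goal (st_shift s) (subst_goal (st_ren s) ?B))"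
    using is_stepE[OF st] by blast
  moreover have "finite (st_src s)" "finite ?B"
    using step_facts(1,2)[OF st] by (simp_all add: is_pgoal_def is_clause_def)
  ultimately have fin: "finite (st_src s)" "finite ?B" and F: "F \<subseteq> st_src s"
    by (auto simp: pgoal_split_def)
  have "card (st_tgt s) \<le> card (F \<union> shift_goal (st_shift s) (subst_goal (st_ren s) ?B))"
    unfolding T subst_goal_def using fin F by (intro card_image_le) (auto intro: finite_subset)
  also have "\<dots> \<le> card F + card (shift_goal (st_shift s) (subst_goal (st_ren s) ?B))"
    by (rule card_Un_le)
  also have "card (shift_goal (st_shift s) (subst_goal (st_ren s) ?B)) \<le> card (subst_goal (st_ren s) ?B)"
    unfolding shift_goal_def using fin by (intro card_image_le) simp
  also have "\<dots> \<le> card ?B"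
    unfolding subst_goal_def using fin by (intro card_image_le) simp
  also have "card F \<le> card (st_src s)" using card_mono[OF fin(1) F] .
  finally show ?thesis by simp
qed

lemma card_goal_at_le:
  assumes P: "program P" and d: "pSLD P S G0 (enat n) d"
  shows "card (goal_at G0 d n) \<le> card G0 + n * (\<Sum>c\<in>P. card (snd c))"
  using d
proof (induction n)
  case (Suc n)
  have "card (snd (st_clause (d n))) \<le> (\<Sum>c\<in>P. card (snd c))"
    using P pSLD_stepD(3)[OF Suc.prems] by (intro member_le_sum) (auto simp: program_def)
  then show ?case
    using card_step_tgt_le[OF pSLD_stepD(1)[OF Suc.prems lessI]] pSLD_stepD(4)[OF Suc.prems lessI]
      Suc.IH[OF pSLD_mono[OF Suc.prems]] by simp
qed simp

section \<open>Bounding variant-free derivations\<close>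

definition prefix_unbounded :: "'a list set \<Rightarrow> 'a list \<Rightarrow> bool" where
  "prefix_unbounded T u \<longleftrightarrow> (\<forall>N. \<exists>w\<in>T. N \<le> length w \<and> take (length u) w = u)"

lemma prefix_unbounded_snoc:
  assumes "finite A" "T \<subseteq> lists A" and u: "prefix_unbounded T u"
  obtains a where "prefix_unbounded T (u @ [a])"
proof (rule ccontr)
  assume "\<not> thesis"
  then have "\<not> prefix_unbounded T (u @ [a])" for a using that by blast
  then have "\<forall>a. \<exists>N. \<forall>w\<in>T. N \<le> length w \<longrightarrow> take (Suc (length u)) w \<noteq> u @ [a]"
    unfolding prefix_unbounded_def by auto
  then obtain N where N: "\<forall>a. \<forall>w\<in>T. N a \<le> length w \<longrightarrow> take (Suc (length u)) w \<noteq> u @ [a]"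
    by (rule choice[THEN exE])
  obtain w where w: "w \<in> T" "(\<Sum>a\<in>A. N a) + Suc (length u) \<le> length w" "take (length u) w = u"
    using u unfolding prefix_unbounded_def by blast
  let ?a = "w ! length u"
  have "length u < length w" using w(2) by simp
  then have "take (Suc (length u)) w = u @ [?a]" using w(3) by (simp add: take_Suc_conv_app_nth)
  moreover have "?a \<in> A" using assms(2) w(1) \<open>length u < length w\<close> by (auto simp: in_lists_conv_set)
  then have "N ?a \<le> length w" using assms(1) w(2) member_le_sum[of ?a A N] by simp
  ultimately show False using N w(1) by blast
qed

lemma koenig_lists:
  fixes T :: "'a list set"
  assumes "finite A" "T \<subseteq> lists A" and take_closed: "\<And>w k. w \<in> T \<Longrightarrow> take k w \<in> T"
    and unbounded: "\<And>N. \<exists>w\<in>T. N \<le> length w"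
  obtains f where "\<And>k. map f [0..<k] \<in> T"
proof -
  have "\<exists>us. \<forall>n. (prefix_unbounded T (us n) \<and> length (us n) = n) \<and> (\<exists>a. us (Suc n) = us n @ [a])"
  proof (rule dependent_nat_choice)
    show "\<exists>u. prefix_unbounded T u \<and> length u = 0"
      using unbounded by (simp add: prefix_unbounded_def)
    fix u n assume u: "prefix_unbounded T u \<and> length u = n"
    then obtain a where "prefix_unbounded T (u @ [a])" using prefix_unbounded_snoc assms(1,2) by blast
    then show "\<exists>v. (prefix_unbounded T v \<and> length v = Suc n) \<and> (\<exists>a. v = u @ [a])" using u by auto
  qed
  then obtain us where us: "\<And>n. prefix_unbounded T (us n)" "\<And>n. length (us n) = n"
    "\<And>n. \<exists>a. us (Suc n) = us n @ [a]"
    by blast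
  define f where "f k = us (Suc k) ! k" for k
  have "map f [0..<k] = us k" for k
  proof (induction k)
    case 0
    then show ?case using us(2)[of 0] by simp
  next
    case (Suc k)
    obtain a where "us (Suc k) = us k @ [a]" using us(3) by blast
    then show ?case using Suc us(2)[of k] by (simp add: f_def nth_append)
  qed
  moreover have "us k \<in> T" for k
  proof -
    obtain w where "w \<in> T" "take (length (us k)) w = us k"
      using us(1)[of k] unfolding prefix_unbounded_def by blast
    then show ?thesis using take_closed by metis
  qed
  ultimately have "map f [0..<k] \<in> T" for k by simp
  then show ?thesis by (rule that)
qed

lemma pSLD_infinite_along_clauses:
  assumes extend: "\<And>n d. pSLD P S G0 (enat n) d \<Longrightarrow> \<forall>k<n. st_clause (d k) = cl k \<Longrightarrow>
    \<exists>s. st_clause s = cl n \<and> pSLD P S G0 (enat (Suc n)) (d(n := s))"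
  obtains d where "pSLD P S G0 \<infinity> d" "\<And>k. st_clause (d k) = cl k"
proof -
  have "\<exists>D. \<forall>n. (pSLD P S G0 (enat n) (D n) \<and> (\<forall>k<n. st_clause (D n k) = cl k))
      \<and> (\<forall>k<n. D (Suc n) k = D n k)"
  proof (rule dependent_nat_choice)
    show "\<exists>d. pSLD P S G0 (enat 0) d \<and> (\<forall>k<0. st_clause (d k) = cl k)"
      by (simp add: pSLD_def zero_enat_def[symmetric])
    fix d n assume d: "pSLD P S G0 (enat n) d \<and> (\<forall>k<n. st_clause (d k) = cl k)"
    then obtain s where "st_clause s = cl n" "pSLD P S G0 (enat (Suc n)) (d(n := s))"
      using extend by blast
    then show "\<exists>e. (pSLD P S G0 (enat (Suc n)) e \<and> (\<forall>k<Suc n. st_clause (e k) = cl k))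
        \<and> (\<forall>k<n. e k = d k)"
      using d by (intro exI[of _ "d(n := s)"]) (auto simp: less_Suc_eq)
  qed
  then obtain D where D: "\<And>n. pSLD P S G0 (enat n) (D n)" "\<And>n k. k < n \<Longrightarrow> st_clause (D n k) = cl k"
    "\<And>n k. k < n \<Longrightarrow> D (Suc n) k = D n k"
    by blast
  define d where "d k = D (Suc k) k" for k
  have agree: "d k = D n k" if "k < n" for k n
    using that by (induction n) (auto simp: less_Suc_eq D(3) d_def)
  have "pSLD P S G0 (enat n) d \<longleftrightarrow> pSLD P S G0 (enat n) (D n)" for n
    by (rule pSLD_cong) (rule agree)
  then have "pSLD P S G0 \<infinity> d" using D(1) by (simp add: pSLD_infinite_iff)
  moreover have "st_clause (d k) = cl k" for k using D(2)[of k "Suc k"] by (simp add: d_def)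
  ultimately show ?thesis by (rule that)
qed

lemma pSLD_extend_with_clause_of:
  fixes d :: "nat \<Rightarrow> ('f, 'v) pstep"
  assumes inf: "infinite (UNIV :: 'v set)" and S: "scheduling_rule S" and G0: "is_pgoal G0"
    and d: "pSLD P S G0 (enat n) d" and e: "pSLD P S G0 (enat m) e" "n < m"
    and same: "\<forall>k<n. st_clause (d k) = st_clause (e k)"
  obtains s where "pSLD P S G0 (enat (Suc n)) (d(n := s))" "st_clause s = st_clause (e n)"
proof -
  have "variant (goal_at G0 d n) (st_src (e n))"
    using pSLD_same_clauses_variant_goals[OF S d e(1), of n] same pSLD_stepD(4)[OF e]
      less_imp_le[OF e(2)] by simp
  then show ?thesis
    using pSLD_extend_by_variant_step[OF inf S G0 d pSLD_stepD(2,3)[OF e]] that by blast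
qed

lemma unbounded_variant_free_pSLD_clause_sequence:
  assumes "finite P"
    and unbounded: "\<And>N. \<exists>d n. pSLD P S G0 (enat n) d \<and> variant_free G0 d n \<and> N \<le> n"
  obtains cl where
    "\<And>k. \<exists>d. pSLD P S G0 (enat k) d \<and> variant_free G0 d k \<and> (\<forall>i<k. st_clause (d i) = cl i)"
proof -
  define T where
    "T = {map (st_clause \<circ> d) [0..<n] | d n. pSLD P S G0 (enat n) d \<and> variant_free G0 d n}"
  have "T \<subseteq> lists P" by (auto simp: T_def pSLD_def)
  moreover have "take k w \<in> T" if "w \<in> T" for w k
  proof -
    obtain d n where w: "w = map (st_clause \<circ> d) [0..<n]" "pSLD P S G0 (enat n) d"
      "variant_free G0 d n"
      using \<open>w \<in> T\<close> by (auto simp: T_def)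
    have "take k w = map (st_clause \<circ> d) [0..<min k n]"
      using w(1) by (cases "k \<le> n") (simp_all add: take_map min_def)
    moreover have "pSLD P S G0 (enat (min k n)) d" "variant_free G0 d (min k n)"
      using pSLD_mono[OF w(2)] variant_free_mono[OF w(3)] by simp_all
    ultimately show ?thesis unfolding T_def by blast
  qed
  moreover have "\<exists>w\<in>T. N \<le> length w" for N
    using unbounded[of N] unfolding T_def by force
  ultimately obtain cl where cl: "\<And>k. map cl [0..<k] \<in> T"
    using koenig_lists \<open>finite P\<close> by metis
  have "\<exists>d. pSLD P S G0 (enat k) d \<and> variant_free G0 d k \<and> (\<forall>i<k. st_clause (d i) = cl i)" for k
  proof -
    obtain d n where d: "map cl [0..<k] = map (st_clause \<circ> d) [0..<n]"
      "pSLD P S G0 (enat n) d" "variant_free G0 d n"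
      using cl[of k] by (auto simp: T_def)
    moreover have "n = k" using arg_cong[OF d(1), of length] by simp
    ultimately show ?thesis by auto
  qed
  then show ?thesis by (rule that)
qed

text \<open>Otherwise an infinite clause sequence labels variant-free derivations of every length;
  following it gives an infinite derivation, and the two variant goals found by p-\<open>EVR\<^sub>L\<close>
  reappear, up to variance, in one of those variant-free derivations.\<close>
lemma variant_free_pSLD_length_bounded:
  fixes P :: "('f, 'v) clause set" and G :: "('f, 'v) pgoal" and S :: "('f, 'v) pstep set"
  assumes inf: "infinite (UNIV :: 'v set)" and "program P" and G: "is_pgoal G"
    and S: "scheduling_rule S" and pruned: "\<forall>ds. pSLD P S G \<infinity> ds \<longrightarrow> pruned_EVR G \<infinity> ds"
  shows "\<exists>L. \<forall>d n. pSLD P S G (enat n) d \<and> variant_free G d n \<longrightarrow> n \<le> L"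
proof (rule ccontr)
  assume "\<not> ?thesis"
  then have "\<exists>d n. pSLD P S G (enat n) d \<and> variant_free G d n \<and> N < n" for N
    by (auto simp: not_le)
  then have "\<exists>d n. pSLD P S G (enat n) d \<and> variant_free G d n \<and> N \<le> n" for N
    using less_imp_le by blast
  moreover have "finite P" using \<open>program P\<close> by (simp add: program_def)
  ultimately obtain cl where labelled:
    "\<And>k. \<exists>W. pSLD P S G (enat k) W \<and> variant_free G W k \<and> (\<forall>i<k. st_clause (W i) = cl i)"
    using unbounded_variant_free_pSLD_clause_sequence by metis
  have "\<exists>s. st_clause s = cl n \<and> pSLD P S G (enat (Suc n)) (e(n := s))"
    if e: "pSLD P S G (enat n) e" "\<forall>k<n. st_clause (e k) = cl k" for n e
  proof -
    obtain W where W: "pSLD P S G (enat (Suc n)) W" "\<forall>i<Suc n. st_clause (W i) = cl i"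
      using labelled by blast
    then show ?thesis
      using pSLD_extend_with_clause_of[OF inf S G e(1) W(1) lessI] e(2) by (metis less_Suc_eq)
  qed
  then obtain d where d: "pSLD P S G \<infinity> d" "\<And>k. st_clause (d k) = cl k"
    using pSLD_infinite_along_clauses by metis
  have "pruned_EVR G \<infinity> d" using pruned d(1) by blast
  then obtain i j \<tau> \<tau>s where ij: "i < j" "renaming \<tau>" "shifting \<tau>s"
    "goal_at G d j = shift_goal \<tau>s (subst_goal \<tau> (goal_at G d i))"
    unfolding pruned_EVR_def by blast
  obtain f where "bij f" "\<tau> = ren f" using ij(2) renaming_iff_ren by blast
  then have dij: "variant (goal_at G d i) (goal_at G d j)" using variantI ij(3,4) by simp
  obtain W where W: "pSLD P S G (enat j) W" "variant_free G W j" "\<forall>k<j. st_clause (W k) = cl k"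
    using labelled by blast
  have "pSLD P S G (enat j) d" using d(1) by (simp add: pSLD_infinite_iff)
  then have same: "variant (goal_at G W k) (goal_at G d k)" if "k \<le> j" for k
    using pSLD_same_clauses_variant_goals[OF S W(1)] that W(3) d(2) by simp
  have "variant (goal_at G W i) (goal_at G W j)"
    using variant_trans[OF same[of i] variant_trans[OF dij variant_sym[OF same[of j]]]] ij(1) by simp
  then show False using W(2) ij(1) by (auto simp: variant_free_def)
qed

theorem lemmaL5p2p1:
  fixes P :: "('f, 'v) clause set" and G :: "('f, 'v) pgoal" and S :: "('f, 'v) pstep set"
  assumes "infinite (UNIV :: 'v set)"
    and "program P"
    and "is_pgoal G"
    and "scheduling_rule S"
    and "\<forall>ds. pSLD P S G \<infinity> ds \<longrightarrow> pruned_EVR G \<infinity> ds"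
  shows "\<exists>l::nat. \<forall>n ds j. pSLD P S G n ds \<and> enat j \<le> n \<longrightarrow> card (goal_at G ds j) \<le> l"
proof -
  obtain L where L: "\<And>d n. pSLD P S G (enat n) d \<Longrightarrow> variant_free G d n \<Longrightarrow> n \<le> L"
    using variant_free_pSLD_length_bounded[OF assms] by blast
  define M where "M = (\<Sum>c\<in>P. card (snd c))"
  have "card (goal_at G ds j) \<le> card G + L * M" if "pSLD P S G n ds" "enat j \<le> n" for n ds j
  proof -
    have "pSLD P S G (enat j) ds" using pSLD_mono[OF that(1) that(2)] .
    then obtain d m where d: "pSLD P S G (enat m) d" "variant_free G d m"
      and "variant (goal_at G d m) (goal_at G ds j)"
      using pSLD_goal_variant_of_variant_free[OF assms(1,4,3)] by blast
    then have "card (goal_at G ds j) = card (goal_at G d m)" by (simp add: card_variant)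
    also have "\<dots> \<le> card G + m * M" using card_goal_at_le[OF assms(2) d(1)] by (simp add: M_def)
    also have "\<dots> \<le> card G + L * M" using L[OF d] by simp
    finally show ?thesis .
  qed
  then show ?thesis by blast
qed

end
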